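(* (a) For $n\ge 2$ and $1\le d\le n$, in $B_n$: $$[1,n]^d=[d,1]\,[1,n]\,[1,n-1]^{d-1}\quad\text{and}\quad [n,1]^d=[n-1,1]^{d-1}\,[n,1]\,[1,d].$$ (b) Let $1\le\rho\le m$, $x\ge 0$, $m+x\ge 2$, and $\gamma\in B_m$, where $B_m\subseteq B_{m+x}$ via the standard inclusion. Then $$\widehat{\gamma[1,m+x]^{\rho}}=\widehat{\gamma[\rho,1]^x[1,m]^{\rho}}\quad\text{and}\quad\widehat{\gamma[m+x,1]^{\rho}}=\widehat{\gamma[m,1]^{\rho}[1,\rho]^x},$$ where the left sides are closures in $B_{m+x}$ and the right sides are closures in $B_m$. (c) For T-links: $T((m,y),(n,\rho))=\widehat{[\rho,1]^{n-m}[1,m]^{\rho+y}}$ for $2\le\rho\le m\le n$ and $1\le y$; $T((2,y),(n,\rho))=T((2,y),(\rho,n))$ for $2\le\rho,n$ and $1\le y$; $T((m,y),(n,m))=T(m,n+y)$ for $2\le m<n$ with $n\equiv 0\pmod m$ (and $y\ge 1$).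
   Context: $B_n$ is the braid group on $n$ strands with standard generators $\sigma_1,\dots,\sigma_{n-1}$; $\widehat\beta$ denotes the closure. For $a<b$, $[a,b]=\sigma_a\sigma_{a+1}\cdots\sigma_{b-1}$; for $a>b$, $[a,b]=\sigma_{a-1}\sigma_{a-2}\cdots\sigma_b$; $[a,a]=1$. A T-link $T((r_1,s_1),\dots,(r_k,s_k))$, with integers $2\le r_1\le\dots\le r_k$ and $s_i>0$, is the closure of $[1,r_1]^{s_1}\cdots[1,r_k]^{s_k}\in B_{r_k}$; the torus link $T(m,n)$ is $T((m,n))$, the closure of $[1,m]^n\in B_m$. *)

theory Defs
  imports Main
begin

text \<open>Braid words: a letter k > 0 stands for sigma_k, a letter k < 0 for the
inverse of sigma_(-k).  A word lies in B_n iff all letters are nonzero with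
absolute value below n.\<close>

type_synonym bword = "int list"

definition valid_word :: "nat \<Rightarrow> bword \<Rightarrow> bool" where
  "valid_word n w \<longleftrightarrow> (\<forall>k\<in>set w. k \<noteq> 0 \<and> \<bar>k\<bar> < int n)"

definition binv :: "bword \<Rightarrow> bword" where
  "binv w = rev (map uminus w)"

inductive braid_eq :: "nat \<Rightarrow> bword \<Rightarrow> bword \<Rightarrow> bool" for n where
  refl: "valid_word n w \<Longrightarrow> braid_eq n w w"
| sym: "braid_eq n u v \<Longrightarrow> braid_eq n v u"
| trans: "braid_eq n u v \<Longrightarrow> braid_eq n v w \<Longrightarrow> braid_eq n u w"
| cancel1: "valid_word n u \<Longrightarrow> valid_word n v \<Longrightarrow> 1 \<le> i \<Longrightarrow> i < int n \<Longrightarrow>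
      braid_eq n (u @ [i, -i] @ v) (u @ v)"
| cancel2: "valid_word n u \<Longrightarrow> valid_word n v \<Longrightarrow> 1 \<le> i \<Longrightarrow> i < int n \<Longrightarrow>
      braid_eq n (u @ [-i, i] @ v) (u @ v)"
| far_comm: "valid_word n u \<Longrightarrow> valid_word n v \<Longrightarrow> 1 \<le> i \<Longrightarrow> i + 1 < j \<Longrightarrow> j < int n \<Longrightarrow>
      braid_eq n (u @ [i, j] @ v) (u @ [j, i] @ v)"
| braid_rel: "valid_word n u \<Longrightarrow> valid_word n v \<Longrightarrow> 1 \<le> i \<Longrightarrow> i + 1 < int n \<Longrightarrow>
      braid_eq n (u @ [i, i + 1, i] @ v) (u @ [i + 1, i, i + 1] @ v)"

text \<open>Equality of closures of braids (as oriented links up to isotopy),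
expressed combinatorially by Markov's theorem: the equivalence relation on
pairs (number of strands, braid word) generated by braid equality,
conjugation, and (de)stabilization.\<close>

inductive markov_eq :: "nat \<Rightarrow> bword \<Rightarrow> nat \<Rightarrow> bword \<Rightarrow> bool" where
  braid: "1 \<le> n \<Longrightarrow> braid_eq n a b \<Longrightarrow> markov_eq n a n b"
| conj: "1 \<le> n \<Longrightarrow> valid_word n a \<Longrightarrow> valid_word n g \<Longrightarrow>
      markov_eq n (g @ a @ binv g) n a"
| stab_pos: "1 \<le> n \<Longrightarrow> valid_word n a \<Longrightarrow> markov_eq n a (Suc n) (a @ [int n])"
| stab_neg: "1 \<le> n \<Longrightarrow> valid_word n a \<Longrightarrow> markov_eq n a (Suc n) (a @ [- int n])"
| sym: "markov_eq n a m b \<Longrightarrow> markov_eq m b n a"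
| trans: "markov_eq n a m b \<Longrightarrow> markov_eq m b k c \<Longrightarrow> markov_eq n a k c"

definition closure :: "nat \<Rightarrow> bword \<Rightarrow> (nat \<times> bword) set" where
  "closure n w = {(m, v). markov_eq n w m v}"

text \<open>[a,b] = sigma_a ... sigma_(b-1) if a < b, sigma_(a-1) ... sigma_b if a > b,
and the empty word if a = b.\<close>

definition ival :: "nat \<Rightarrow> nat \<Rightarrow> bword" where
  "ival a b = (if a < b then map int [a..<b] else rev (map int [b..<a]))"

definition wpow :: "bword \<Rightarrow> nat \<Rightarrow> bword" where
  "wpow w d = concat (replicate d w)"

definition T_link :: "(nat \<times> nat) list \<Rightarrow> (nat \<times> bword) set" where
  "T_link rs = closure (fst (last rs)) (concat (map (\<lambda>(r, s). wpow (ival 1 r) s) rs))"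

definition torus_link :: "nat \<Rightarrow> nat \<Rightarrow> (nat \<times> bword) set" where
  "torus_link m n = T_link [(m, n)]"

end

theory Submission
  imports Defs
begin

text \<open>Conjugation by [1,n] shifts sigma_i to sigma_(i+1) for i \<le> n-2, so
[1,n]^2 = sigma_1 [1,n] [1,n-1], and (a) follows by induction on d; its second
half is the image of the first under word reversal. For (b), (a) on N+1 strands
carries the last letter sigma_N of [1,N+1]^rho to the end of a cyclic rotation,
where it is destabilized, leaving one copy of [rho,1] behind; induct on x.
The T-link identities follow from (b) and cyclic rotation, the third one also
from [m,1]^m = [1,m]^m (both are the full twist). For T((2,y),(n,rho)),
conjugation by the half twist turns sigma_1^y [1,n]^rho into
sigma_(n-1)^y [n,1]^rho, conjugation by [n,1]^(n-2) turns sigma_(n-1) back into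
sigma_1, and (b) reduces sigma_1^y [n,1]^rho to sigma_1^y [rho,1]^rho [1,rho]^(n-rho),
which is sigma_1^y [1,rho]^n.\<close>

lemma valid_word_append [simp]: "valid_word n (u @ v) \<longleftrightarrow> valid_word n u \<and> valid_word n v"
  by (auto simp: valid_word_def)

lemma valid_word_Cons [simp]: "valid_word n (k # u) \<longleftrightarrow> k \<noteq> 0 \<and> \<bar>k\<bar> < int n \<and> valid_word n u"
  by (auto simp: valid_word_def)

lemma valid_word_Nil [simp]: "valid_word n []"
  by (simp add: valid_word_def)

lemma valid_word_binv [simp]: "valid_word n (binv u) \<longleftrightarrow> valid_word n u"
  by (auto simp: valid_word_def binv_def)

lemma valid_word_mono: "valid_word n u \<Longrightarrow> n \<le> n' \<Longrightarrow> valid_word n' u"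
  by (force simp: valid_word_def)

lemma wpow_0 [simp]: "wpow w 0 = []"
  by (simp add: wpow_def)

lemma wpow_Suc: "wpow w (Suc d) = w @ wpow w d"
  by (simp add: wpow_def)

lemma wpow_add: "wpow w (a + b) = wpow w a @ wpow w b"
  by (simp add: wpow_def replicate_add)

lemma wpow_Suc_right: "wpow w (Suc d) = wpow w d @ w"
  using wpow_add[of w d 1] by (simp add: wpow_def)

lemma wpow_mult: "wpow w (a * b) = wpow (wpow w a) b"
  by (induction b) (simp_all add: wpow_Suc wpow_add)

lemma wpow_commute: "wpow w a @ wpow w b = wpow w b @ wpow w a"
  by (metis add.commute wpow_add)

lemma rev_wpow: "rev (wpow w d) = wpow (rev w) d"
  by (induction d) (simp_all add: wpow_Suc, metis wpow_Suc wpow_Suc_right)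

lemma map_wpow: "map f (wpow w d) = wpow (map f w) d"
  by (simp add: wpow_def map_concat)

lemma set_wpow: "set (wpow w d) \<subseteq> set w"
  by (auto simp: wpow_def)

lemma valid_word_wpow: "valid_word n w \<Longrightarrow> valid_word n (wpow w d)"
  using set_wpow[of w d] by (auto simp: valid_word_def)

lemma set_ival: "k \<in> set (ival a b) \<Longrightarrow> int (min a b) \<le> k \<and> k < int (max a b)"
  by (auto simp: ival_def split: if_splits)

lemma ival_same [simp]: "ival a a = []"
  by (simp add: ival_def)

lemma valid_word_ival: "1 \<le> a \<Longrightarrow> 1 \<le> b \<Longrightarrow> a \<le> n \<Longrightarrow> b \<le> n \<Longrightarrow> valid_word n (ival a b)"
  by (fastforce simp: valid_word_def min_def max_def dest!: set_ival split: if_splits)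

lemma rev_ival: "rev (ival a b) = ival b a"
  by (auto simp: ival_def)

lemma ival_1_Suc: "1 \<le> n \<Longrightarrow> ival 1 (Suc n) = ival 1 n @ [int n]"
  by (simp add: ival_def)

lemma ival_Suc_1: "1 \<le> n \<Longrightarrow> ival (Suc n) 1 = int n # ival n 1"
  by (metis ival_1_Suc rev_ival rev_eq_Cons_iff rev_rev_ident)

lemma ival_1_Cons: "2 \<le> n \<Longrightarrow> ival 1 n = 1 # ival 2 n"
  by (simp add: ival_def upt_conv_Cons numeral_2_eq_2)

lemma ival_Suc_2_snoc: "1 \<le> d \<Longrightarrow> ival (Suc d) 2 @ [1] = ival (Suc d) 1"
  by (cases "d = 1") (simp_all add: ival_def upt_conv_Cons numeral_2_eq_2)

lemma map_Suc_ival: "map (\<lambda>k. k + 1) (ival a b) = ival (Suc a) (Suc b)"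
proof -
  have shift: "map ((\<lambda>k. k + 1) \<circ> int) xs = map int (map Suc xs)" for xs
    by simp
  show ?thesis
    unfolding ival_def by (auto simp del: upt_Suc simp: shift rev_map[symmetric] map_Suc_upt)
qed

lemma map_diff_ival_1: "map (\<lambda>k. int n - k) (ival 1 n) = ival n 1"
  by (auto simp: ival_def intro!: nth_equalityI simp: rev_nth)


lemmas [trans] = braid_eq.trans

lemma braid_eq_valid_word: "braid_eq n u v \<Longrightarrow> valid_word n u \<and> valid_word n v"
  by (induction rule: braid_eq.induct) auto

lemma braid_eq_context:
  "braid_eq n u v \<Longrightarrow> valid_word n a \<Longrightarrow> valid_word n b \<Longrightarrow> braid_eq n (a @ u @ b) (a @ v @ b)"
proof (induction rule: braid_eq.induct)
  case (refl w) then show ?case by (simp add: braid_eq.refl)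
next
  case (sym u v) then show ?case by (blast intro: braid_eq.sym)
next
  case (trans u v w) then show ?case by (blast intro: braid_eq.trans)
next
  case (cancel1 u v i) then show ?case using braid_eq.cancel1[of n "a @ u" "v @ b" i] by simp
next
  case (cancel2 u v i) then show ?case using braid_eq.cancel2[of n "a @ u" "v @ b" i] by simp
next
  case (far_comm u v i j) then show ?case using braid_eq.far_comm[of n "a @ u" "v @ b" i j] by simp
next
  case (braid_rel u v i) then show ?case using braid_eq.braid_rel[of n "a @ u" "v @ b" i] by simp
qed

lemma braid_eq_append_left: "braid_eq n u v \<Longrightarrow> valid_word n a \<Longrightarrow> braid_eq n (a @ u) (a @ v)"
  using braid_eq_context[of n u v a "[]"] by simp

lemma braid_eq_append_right: "braid_eq n u v \<Longrightarrow> valid_word n b \<Longrightarrow> braid_eq n (u @ b) (v @ b)"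
  using braid_eq_context[of n u v "[]" b] by simp

lemma braid_eq_append: "braid_eq n u u' \<Longrightarrow> braid_eq n v v' \<Longrightarrow> braid_eq n (u @ v) (u' @ v')"
  by (meson braid_eq.trans braid_eq_append_left braid_eq_append_right braid_eq_valid_word)

lemma braid_eq_wpow: "braid_eq n u v \<Longrightarrow> braid_eq n (wpow u k) (wpow v k)"
  by (induction k) (simp_all add: wpow_Suc braid_eq.refl braid_eq_append)

lemma braid_eq_mono: "braid_eq n u v \<Longrightarrow> n \<le> n' \<Longrightarrow> braid_eq n' u v"
proof (induction rule: braid_eq.induct)
  case (refl w) then show ?case by (simp add: braid_eq.refl valid_word_mono)
next
  case (sym u v) then show ?case by (blast intro: braid_eq.sym)
next
  case (trans u v w) then show ?case by (blast intro: braid_eq.trans)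
next
  case (cancel1 u v i) then show ?case by (intro braid_eq.cancel1) (auto intro: valid_word_mono)
next
  case (cancel2 u v i) then show ?case by (intro braid_eq.cancel2) (auto intro: valid_word_mono)
next
  case (far_comm u v i j) then show ?case by (intro braid_eq.far_comm) (auto intro: valid_word_mono)
next
  case (braid_rel u v i) then show ?case by (intro braid_eq.braid_rel) (auto intro: valid_word_mono)
qed

text \<open>Reversal is the anti-automorphism of \<open>B\<^sub>n\<close> fixing every generator.\<close>

lemma braid_eq_rev: "braid_eq n u v \<Longrightarrow> braid_eq n (rev u) (rev v)"
proof (induction rule: braid_eq.induct)
  case (refl w) then show ?case by (simp add: braid_eq.refl valid_word_def)
next
  case (sym u v) then show ?case by (blast intro: braid_eq.sym)
next
  case (trans u v w) then show ?case by (blast intro: braid_eq.trans)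
next
  case (cancel1 u v i) then show ?case
    using braid_eq.cancel2[of n "rev v" "rev u" i] by (simp add: valid_word_def)
next
  case (cancel2 u v i) then show ?case
    using braid_eq.cancel1[of n "rev v" "rev u" i] by (simp add: valid_word_def)
next
  case (far_comm u v i j) then show ?case
    using braid_eq.far_comm[of n "rev v" "rev u" i j] by (simp add: braid_eq.sym valid_word_def)
next
  case (braid_rel u v i) then show ?case
    using braid_eq.braid_rel[of n "rev v" "rev u" i] by (simp add: valid_word_def)
qed

lemma braid_eq_cancel_binv:
  "valid_word n a \<Longrightarrow> valid_word n w \<Longrightarrow> valid_word n b \<Longrightarrow> braid_eq n (a @ w @ binv w @ b) (a @ b)"
proof (induction w arbitrary: a b)
  case Nil then show ?case by (simp add: braid_eq.refl binv_def)
next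
  case (Cons c w)
  have "a @ (c # w) @ binv (c # w) @ b = (a @ [c]) @ w @ binv w @ ([-c] @ b)"
    by (simp add: binv_def)
  also have "braid_eq n \<dots> ((a @ [c]) @ ([-c] @ b))"
    using Cons by (intro Cons.IH) auto
  also have "\<dots> = a @ [c, -c] @ b"
    by simp
  also have "braid_eq n \<dots> (a @ b)"
  proof (cases "c > 0")
    case True then show ?thesis using Cons braid_eq.cancel1[of n a b c] by auto
  next
    case False then show ?thesis using Cons braid_eq.cancel2[of n a b "-c"] by auto
  qed
  finally show ?case .
qed

lemma braid_eq_move_word:
  assumes "valid_word n g" "\<And>k. k \<in> set w \<Longrightarrow> braid_eq n (g @ [k]) ([f k] @ g)"
  shows "braid_eq n (g @ w) (map f w @ g)"
  using assms(2)
proof (induction w)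
  case Nil then show ?case using assms by (simp add: braid_eq.refl)
next
  case (Cons k w)
  have hk: "braid_eq n (g @ [k]) ([f k] @ g)" using Cons by simp
  have "valid_word n w"
    using Cons.prems braid_eq_valid_word by (fastforce simp: valid_word_def)
  then have "braid_eq n (g @ [k] @ w) ([f k] @ g @ w)"
    using braid_eq_append_right[OF hk] by simp
  also have "braid_eq n ([f k] @ g @ w) ([f k] @ map f w @ g)"
    using Cons braid_eq_valid_word[OF hk] by (intro braid_eq_append_left) auto
  finally show ?case by simp
qed

lemma braid_eq_commute_far:
  assumes "1 \<le> j" "j < int n" "\<forall>k\<in>set w. 1 \<le> k \<and> k < int n \<and> (k + 1 < j \<or> j + 1 < k)"
  shows "braid_eq n ([j] @ w) (w @ [j])"
proof -
  have "braid_eq n ([j] @ w) (map id w @ [j])"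
  proof (rule braid_eq_move_word)
    fix k assume "k \<in> set w"
    then have k: "1 \<le> k" "k < int n" "k + 1 < j \<or> j + 1 < k"
      using assms(3) by auto
    show "braid_eq n ([j] @ [k]) ([id k] @ [j])"
    proof (cases "j + 1 < k")
      case True
      then show ?thesis
        using braid_eq.far_comm[of n "[]" "[]" j k] assms k by simp
    next
      case False
      then show ?thesis
        using braid_eq.sym[OF braid_eq.far_comm[of n "[]" "[]" k j]] assms k by simp
    qed
  qed (use assms in simp)
  then show ?thesis by simp
qed

lemma ival_1_letter_shift:
  assumes "1 \<le> i" "i + 2 \<le> n"
  shows "braid_eq n (ival 1 n @ [int i]) ((int i + 1) # ival 1 n)"
proof -
  define P where "P = map int [1..<i]"
  define R where "R = map int [i + 2..<n]"
  have split: "ival 1 n = P @ [int i, int i + 1] @ R"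
  proof -
    have "[1..<n] = [1..<i] @ [i..<n]"
      using assms upt_add_eq_append[of 1 i "n - i"] by simp
    moreover have "[i..<n] = i # Suc i # [i + 2..<n]"
      using assms by (simp add: upt_conv_Cons)
    ultimately show ?thesis
      using assms by (simp add: ival_def P_def R_def)
  qed
  have vP: "valid_word n P" and vR: "valid_word n R"
    using assms by (auto simp: P_def R_def valid_word_def)
  have R_far: "braid_eq n ([int i] @ R) (R @ [int i])"
    using assms by (intro braid_eq_commute_far) (auto simp: R_def)
  have P_far: "braid_eq n ([int i + 1] @ P) (P @ [int i + 1])"
    using assms by (intro braid_eq_commute_far) (auto simp: P_def)
  have "braid_eq n (ival 1 n @ [int i]) ((P @ [int i, int i + 1]) @ [int i] @ R)"
    using split braid_eq_append_left[OF braid_eq.sym[OF R_far], of "P @ [int i, int i + 1]"] assms vP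
    by simp
  also have "braid_eq n \<dots> (P @ [int i + 1, int i, int i + 1] @ R)"
    using braid_eq.braid_rel[of n P R "int i"] assms vP vR by simp
  also have "braid_eq n \<dots> (([int i + 1] @ P) @ [int i, int i + 1] @ R)"
    using braid_eq_append_right[OF braid_eq.sym[OF P_far], of "[int i, int i + 1] @ R"] assms vR
    by simp
  finally show ?thesis
    using split by simp
qed

lemma ival_down_letter_shift:
  assumes "1 \<le> i" "i + 2 \<le> n"
  shows "braid_eq n (ival n 1 @ [int i + 1]) (int i # ival n 1)"
  using braid_eq.sym[OF braid_eq_rev[OF ival_1_letter_shift[OF assms]]] by (simp add: rev_ival)

lemma ival_1_word_shift:
  assumes "2 \<le> n" "\<forall>k\<in>set w. 1 \<le> k \<and> k + 2 \<le> int n"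
  shows "braid_eq n (ival 1 n @ w) (map (\<lambda>k. k + 1) w @ ival 1 n)"
proof (rule braid_eq_move_word)
  show "valid_word n (ival 1 n)"
    using assms by (intro valid_word_ival) auto
  fix k assume "k \<in> set w"
  then have "1 \<le> nat k" "nat k + 2 \<le> n" "k = int (nat k)"
    using assms by auto
  then show "braid_eq n (ival 1 n @ [k]) ([k + 1] @ ival 1 n)"
    using ival_1_letter_shift[of "nat k" n] by simp
qed

lemma ival_1_square:
  assumes "2 \<le> n"
  shows "braid_eq n (ival 1 n @ ival 1 n) ([1] @ ival 1 n @ ival 1 (n - 1))"
proof -
  have "braid_eq n (ival 1 n @ ival 1 (n - 1)) (map (\<lambda>k. k + 1) (ival 1 (n - 1)) @ ival 1 n)"
    using assms by (intro ival_1_word_shift) (auto dest!: set_ival)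
  moreover have "map (\<lambda>k. k + 1) (ival 1 (n - 1)) = ival 2 n"
    using assms map_Suc_ival[of 1 "n - 1"] by (simp add: numeral_2_eq_2)
  ultimately have "braid_eq n ([1] @ ival 1 n @ ival 1 (n - 1)) ([1] @ ival 2 n @ ival 1 n)"
    using assms by (intro braid_eq_append_left) auto
  then show ?thesis
    using ival_1_Cons[OF assms] by (simp add: braid_eq.sym)
qed

theorem wpow_ival_1:
  assumes "2 \<le> n" "1 \<le> d" "d \<le> n"
  shows "braid_eq n (wpow (ival 1 n) d) (ival d 1 @ ival 1 n @ wpow (ival 1 (n - 1)) (d - 1))"
  using assms(2,3)
proof (induction d rule: nat_induct_at_least)
  case base
  then show ?case
    using assms by (simp add: wpow_Suc braid_eq.refl valid_word_ival)
next
  case (Suc d)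
  define X where "X = ival 1 n"
  define Y where "Y = ival 1 (n - 1)"
  have vX: "valid_word n X" and vY: "valid_word n (wpow Y (d - 1))"
    using assms by (simp_all add: X_def Y_def valid_word_ival valid_word_wpow)
  have shift: "braid_eq n (X @ ival d 1) (ival (Suc d) 2 @ X)"
  proof -
    have "braid_eq n (X @ ival d 1) (map (\<lambda>k. k + 1) (ival d 1) @ X)"
      unfolding X_def using Suc assms by (intro ival_1_word_shift) (auto dest!: set_ival)
    then show ?thesis
      using map_Suc_ival[of d 1] by (simp add: numeral_2_eq_2)
  qed
  have "braid_eq n (X @ wpow X d) (X @ ival d 1 @ X @ wpow Y (d - 1))"
    using Suc vX by (intro braid_eq_append_left) (auto simp: X_def Y_def)
  also have "braid_eq n \<dots> (ival (Suc d) 2 @ X @ X @ wpow Y (d - 1))"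
    using braid_eq_append_right[OF shift, of "X @ wpow Y (d - 1)"] vX vY by simp
  also have "braid_eq n \<dots> (ival (Suc d) 2 @ [1] @ X @ Y @ wpow Y (d - 1))"
    using braid_eq_context[OF ival_1_square[OF assms(1)], of "ival (Suc d) 2" "wpow Y (d - 1)"]
      Suc assms vY by (simp add: X_def Y_def valid_word_ival)
  also have "\<dots> = ival (Suc d) 1 @ X @ wpow Y d"
    using Suc ival_Suc_2_snoc[of d] wpow_Suc[of Y "d - 1"] by simp
  finally show ?case
    by (simp add: wpow_Suc X_def Y_def)
qed

theorem wpow_ival_down:
  assumes "2 \<le> n" "1 \<le> d" "d \<le> n"
  shows "braid_eq n (wpow (ival n 1) d) (wpow (ival (n - 1) 1) (d - 1) @ ival n 1 @ ival 1 d)"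
  using braid_eq_rev[OF wpow_ival_1[OF assms]] by (simp add: rev_wpow rev_ival)

lemma ival_down_up_commute:
  assumes "1 \<le> i" "i + 2 \<le> n"
  shows "braid_eq n ((ival n 1 @ ival 1 n) @ [int i]) ([int i] @ ival n 1 @ ival 1 n)"
proof -
  have vn: "valid_word n (ival n 1)" "valid_word n (ival 1 n)"
    using assms by (auto intro!: valid_word_ival)
  have "braid_eq n (ival n 1 @ ival 1 n @ [int i]) (ival n 1 @ (int i + 1) # ival 1 n)"
    using ival_1_letter_shift[OF assms] vn by (intro braid_eq_append_left) auto
  also have "braid_eq n \<dots> (int i # ival n 1 @ ival 1 n)"
    using braid_eq_append_right[OF ival_down_letter_shift[OF assms] vn(2)] by simp
  finally show ?thesis
    by simp
qed

lemma wpow_ival_down_self: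
  assumes "1 \<le> n"
  shows "braid_eq n (wpow (ival n 1) n) (wpow (ival 1 n) n)"
  using assms
proof (induction n rule: nat_induct_at_least)
  case base
  then show ?case
    by (simp add: wpow_Suc ival_def braid_eq.refl)
next
  case (Suc m)
  define n where "n = Suc m"
  have n2: "2 \<le> n"
    using Suc n_def by simp
  define A where "A = ival n 1 @ ival 1 n"
  define W where "W = wpow (ival 1 m) m"
  have vA: "valid_word n A"
    using n2 by (auto simp: A_def intro!: valid_word_ival)
  have "braid_eq n (wpow (ival n 1) n) (wpow (ival m 1) m @ A)"
    using wpow_ival_down[OF n2, of n] n2 by (simp add: A_def n_def)
  also have "braid_eq n \<dots> (W @ A)"
    using braid_eq_mono[OF Suc.IH] vA by (intro braid_eq_append_right) (auto simp: W_def n_def)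
  also have "braid_eq n \<dots> (A @ W)"
  proof -
    have "braid_eq n (A @ W) (map id W @ A)"
    proof (rule braid_eq_move_word[OF vA])
      fix k assume "k \<in> set W"
      then have "k \<in> set (ival 1 m)"
        using set_wpow unfolding W_def by blast
      then have "1 \<le> nat k" "nat k + 2 \<le> n" "k = int (nat k)"
        using Suc n_def by (auto dest!: set_ival)
      then show "braid_eq n (A @ [k]) ([id k] @ A)"
        using ival_down_up_commute[of "nat k" n] by (simp add: A_def)
    qed
    then show ?thesis
      by (simp add: braid_eq.sym)
  qed
  also have "braid_eq n \<dots> (wpow (ival 1 n) n)"
    using wpow_ival_1[OF n2, of n] n2 by (simp add: A_def W_def n_def braid_eq.sym)
  finally show ?case
    by (simp add: n_def)
qed

lemma wpow_ival_down_letter_shift: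
  assumes "2 \<le> n" "k < j" "j + 1 \<le> n"
  shows "braid_eq n (wpow (ival n 1) k @ [int j]) ((int j - int k) # wpow (ival n 1) k)"
  using assms(2)
proof (induction k)
  case 0
  then show ?case
    using assms by (simp add: braid_eq.refl)
next
  case (Suc k)
  have vn: "valid_word n (ival n 1)"
    using assms by (intro valid_word_ival) auto
  have "braid_eq n (ival n 1 @ wpow (ival n 1) k @ [int j]) (ival n 1 @ (int j - int k) # wpow (ival n 1) k)"
    using Suc vn by (intro braid_eq_append_left) auto
  also have "braid_eq n \<dots> (int (j - Suc k) # ival n 1 @ wpow (ival n 1) k)"
  proof -
    have "braid_eq n (ival n 1 @ [int (j - Suc k) + 1]) (int (j - Suc k) # ival n 1)"
      using ival_down_letter_shift[of "j - Suc k" n] Suc assms by auto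
    from braid_eq_append_right[OF this valid_word_wpow[OF vn]] show ?thesis
      using Suc by (simp add: of_nat_diff)
  qed
  finally show ?case
    using Suc by (simp add: wpow_Suc of_nat_diff)
qed

fun half_twist :: "nat \<Rightarrow> bword" where
  "half_twist 0 = []"
| "half_twist (Suc n) = ival 1 (Suc n) @ half_twist n"

lemma set_half_twist: "k \<in> set (half_twist n) \<Longrightarrow> 1 \<le> k \<and> k < int n"
  by (induction n) (auto dest!: set_ival)

lemma valid_word_half_twist: "valid_word n (half_twist n)"
  using set_half_twist unfolding valid_word_def by fastforce

lemma half_twist_letter_flip:
  "1 \<le> i \<Longrightarrow> i < n \<Longrightarrow> braid_eq n (half_twist n @ [int i]) ((int n - int i) # half_twist n)"
proof (induction n arbitrary: i)
  case 0
  then show ?case by simp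
next
  case (Suc n)
  define X where "X = ival 1 (Suc n)"
  have vX: "valid_word (Suc n) X"
    unfolding X_def by (intro valid_word_ival) auto
  have vD: "valid_word (Suc n) (half_twist n)"
    using valid_word_mono[OF valid_word_half_twist] by simp
  show ?case
  proof (cases "i < n")
    case True
    have "braid_eq (Suc n) (X @ half_twist n @ [int i]) (X @ (int n - int i) # half_twist n)"
      using braid_eq_mono[OF Suc.IH[of i]] True Suc.prems vX by (intro braid_eq_append_left) auto
    also have "braid_eq (Suc n) \<dots> ((int (n - i) + 1) # X @ half_twist n)"
    proof -
      have "braid_eq (Suc n) (X @ [int (n - i)]) ((int (n - i) + 1) # X)"
        using ival_1_letter_shift[of "n - i" "Suc n"] True Suc.prems by (auto simp: X_def)
      from braid_eq_append_right[OF this vD] show ?thesis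
        using True by (simp add: of_nat_diff)
    qed
    finally show ?thesis
      using True by (simp add: X_def algebra_simps)
  next
    case False
    then have i: "i = n"
      using Suc.prems by simp
    then obtain p where p: "n = Suc p"
      using Suc.prems by (cases n) auto
    have vDp: "valid_word (Suc n) (half_twist p)"
      using valid_word_mono[OF valid_word_half_twist, of p "Suc n"] p by simp
    have far: "braid_eq (Suc n) ([int n] @ half_twist p) (half_twist p @ [int n])"
      using p by (intro braid_eq_commute_far) (auto dest!: set_half_twist)
    have vi: "valid_word (Suc n) (ival 1 n)"
      using p by (intro valid_word_ival) auto
    have "braid_eq (Suc n) (X @ ival 1 n @ half_twist p @ [int n]) (X @ ival 1 n @ [int n] @ half_twist p)"
      using braid_eq_append_left[OF braid_eq.sym[OF far], of "X @ ival 1 n"] vX vi by simp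
    also have "\<dots> = X @ X @ half_twist p"
      using ival_1_Suc[of n] p by (simp add: X_def)
    also have "braid_eq (Suc n) \<dots> ([1] @ X @ ival 1 n @ half_twist p)"
      using braid_eq_append_right[OF ival_1_square vDp] p by (simp add: X_def)
    finally show ?thesis
      using i p by (simp add: X_def)
  qed
qed

lemma half_twist_word_flip:
  assumes "\<forall>k\<in>set w. 1 \<le> k \<and> k < int n"
  shows "braid_eq n (half_twist n @ w) (map (\<lambda>k. int n - k) w @ half_twist n)"
proof (rule braid_eq_move_word[OF valid_word_half_twist])
  fix k assume "k \<in> set w"
  then have "1 \<le> nat k" "nat k < n" "k = int (nat k)"
    using assms by auto
  then show "braid_eq n (half_twist n @ [k]) ([int n - k] @ half_twist n)"
    using half_twist_letter_flip[of "nat k" n] by simp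
qed

lemmas [trans] = markov_eq.trans

lemma markov_eq_refl: "1 \<le> n \<Longrightarrow> valid_word n a \<Longrightarrow> markov_eq n a n a"
  by (simp add: markov_eq.braid braid_eq.refl)

lemma closure_eqI: "markov_eq n a m b \<Longrightarrow> closure n a = closure m b"
  unfolding closure_def by (auto intro: markov_eq.trans markov_eq.sym)

lemma markov_eq_conj_braid:
  assumes "1 \<le> n" "valid_word n g" "valid_word n a" "braid_eq n (g @ a @ binv g) b"
  shows "markov_eq n a n b"
  using assms markov_eq.sym[OF markov_eq.conj] markov_eq.braid by (blast intro: markov_eq.trans)

lemma markov_eq_rotate:
  assumes "1 \<le> n" "valid_word n u" "valid_word n v"
  shows "markov_eq n (u @ v) n (v @ u)"
proof (rule markov_eq_conj_braid)
  show "braid_eq n (v @ (u @ v) @ binv v) (v @ u)"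
    using braid_eq_cancel_binv[of n "v @ u" v "[]"] assms by simp
qed (use assms in auto)

lemma markov_eq_destab: "1 \<le> n \<Longrightarrow> valid_word n a \<Longrightarrow> markov_eq (Suc n) (a @ [int n]) n a"
  by (rule markov_eq.sym, rule markov_eq.stab_pos)

lemma markov_eq_ival_1_destab_Suc:
  assumes "1 \<le> \<rho>" "\<rho> \<le> n" "valid_word n \<gamma>"
  shows "markov_eq (Suc n) (\<gamma> @ wpow (ival 1 (Suc n)) \<rho>) n (\<gamma> @ ival \<rho> 1 @ wpow (ival 1 n) \<rho>)"
proof -
  have n1: "1 \<le> n"
    using assms by simp
  define W where "W = wpow (ival 1 n) (\<rho> - 1)"
  define U where "U = \<gamma> @ ival \<rho> 1 @ ival 1 n"
  have vU: "valid_word n U" and vW: "valid_word n W"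
    using assms by (auto simp: U_def W_def intro!: valid_word_ival valid_word_wpow)
  have "braid_eq (Suc n) (wpow (ival 1 (Suc n)) \<rho>) (ival \<rho> 1 @ ival 1 (Suc n) @ W)"
    using wpow_ival_1[of "Suc n" \<rho>] assms by (simp add: W_def)
  from braid_eq_append_left[OF this valid_word_mono[OF assms(3)]]
  have "markov_eq (Suc n) (\<gamma> @ wpow (ival 1 (Suc n)) \<rho>) (Suc n) ((U @ [int n]) @ W)"
    using markov_eq.braid ival_1_Suc[OF n1] by (simp add: U_def)
  also have "markov_eq (Suc n) \<dots> (Suc n) ((W @ U) @ [int n])"
    using markov_eq_rotate[of "Suc n" "U @ [int n]" W] valid_word_mono[OF vU] valid_word_mono[OF vW] n1
    by simp
  also have "markov_eq (Suc n) \<dots> n (W @ U)"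
    using markov_eq_destab[OF n1, of "W @ U"] vU vW by simp
  also have "markov_eq n \<dots> n (U @ W)"
    using markov_eq_rotate[OF n1 vW vU] .
  also have "U @ W = \<gamma> @ ival \<rho> 1 @ wpow (ival 1 n) \<rho>"
    using assms wpow_Suc[of "ival 1 n" "\<rho> - 1"] by (simp add: U_def W_def)
  finally show ?thesis .
qed

lemma markov_eq_ival_down_destab_Suc:
  assumes "1 \<le> \<rho>" "\<rho> \<le> n" "valid_word n \<gamma>"
  shows "markov_eq (Suc n) (\<gamma> @ wpow (ival (Suc n) 1) \<rho>) n (ival 1 \<rho> @ \<gamma> @ wpow (ival n 1) \<rho>)"
proof -
  have n1: "1 \<le> n"
    using assms by simp
  define V where "V = wpow (ival n 1) (\<rho> - 1)"
  define Z where "Z = ival n 1 @ ival 1 \<rho>"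
  have vV: "valid_word n V" and vZ: "valid_word n Z"
    using assms by (auto simp: V_def Z_def intro!: valid_word_ival valid_word_wpow)
  have "braid_eq (Suc n) (wpow (ival (Suc n) 1) \<rho>) (V @ ival (Suc n) 1 @ ival 1 \<rho>)"
    using wpow_ival_down[of "Suc n" \<rho>] assms by (simp add: V_def)
  from braid_eq_append_left[OF this valid_word_mono[OF assms(3)]]
  have "markov_eq (Suc n) (\<gamma> @ wpow (ival (Suc n) 1) \<rho>) (Suc n) ((\<gamma> @ V @ [int n]) @ Z)"
    using markov_eq.braid ival_Suc_1[OF n1] by (simp add: Z_def)
  also have "markov_eq (Suc n) \<dots> (Suc n) ((Z @ \<gamma> @ V) @ [int n])"
    using markov_eq_rotate[of "Suc n" "\<gamma> @ V @ [int n]" Z] valid_word_mono[OF vV, of "Suc n"]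
      valid_word_mono[OF vZ, of "Suc n"] valid_word_mono[OF assms(3), of "Suc n"] n1
    by simp
  also have "markov_eq (Suc n) \<dots> n (ival n 1 @ ival 1 \<rho> @ \<gamma> @ V)"
    using markov_eq_destab[OF n1, of "Z @ \<gamma> @ V"] vZ vV assms by (simp add: Z_def)
  also have "markov_eq n \<dots> n ((ival 1 \<rho> @ \<gamma> @ V) @ ival n 1)"
    using markov_eq_rotate[OF n1, of "ival n 1" "ival 1 \<rho> @ \<gamma> @ V"] vZ vV assms
    by (simp add: Z_def)
  also have "(ival 1 \<rho> @ \<gamma> @ V) @ ival n 1 = ival 1 \<rho> @ \<gamma> @ wpow (ival n 1) \<rho>"
    using assms wpow_Suc_right[of "ival n 1" "\<rho> - 1"] by (simp add: V_def)
  finally show ?thesis .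
qed

lemma markov_eq_ival_1_destab:
  assumes "1 \<le> \<rho>" "\<rho> \<le> m" "valid_word m \<gamma>"
  shows "markov_eq (m + x) (\<gamma> @ wpow (ival 1 (m + x)) \<rho>) m (\<gamma> @ wpow (ival \<rho> 1) x @ wpow (ival 1 m) \<rho>)"
  using assms(3)
proof (induction x arbitrary: \<gamma>)
  case 0
  then show ?case
    using assms by (auto intro!: markov_eq_refl valid_word_wpow valid_word_ival)
next
  case (Suc x)
  have "markov_eq (m + Suc x) (\<gamma> @ wpow (ival 1 (m + Suc x)) \<rho>) (m + x)
      ((\<gamma> @ ival \<rho> 1) @ wpow (ival 1 (m + x)) \<rho>)"
    using markov_eq_ival_1_destab_Suc[of \<rho> "m + x" \<gamma>] assms valid_word_mono[OF Suc.prems] by simp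
  also have "markov_eq (m + x) \<dots> m ((\<gamma> @ ival \<rho> 1) @ wpow (ival \<rho> 1) x @ wpow (ival 1 m) \<rho>)"
    using Suc assms by (intro Suc.IH) (auto intro!: valid_word_ival)
  finally show ?case
    by (simp add: wpow_Suc)
qed

lemma markov_eq_ival_down_destab:
  assumes "1 \<le> \<rho>" "\<rho> \<le> m" "valid_word m \<gamma>"
  shows "markov_eq (m + x) (\<gamma> @ wpow (ival (m + x) 1) \<rho>) m (\<gamma> @ wpow (ival m 1) \<rho> @ wpow (ival 1 \<rho>) x)"
  using assms(3)
proof (induction x arbitrary: \<gamma>)
  case 0
  then show ?case
    using assms by (auto intro!: markov_eq_refl valid_word_wpow valid_word_ival)
next
  case (Suc x)
  have v1: "valid_word m (ival 1 \<rho>)"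
    using assms by (intro valid_word_ival) auto
  have "markov_eq (m + Suc x) (\<gamma> @ wpow (ival (m + Suc x) 1) \<rho>) (m + x)
      ((ival 1 \<rho> @ \<gamma>) @ wpow (ival (m + x) 1) \<rho>)"
    using markov_eq_ival_down_destab_Suc[of \<rho> "m + x" \<gamma>] assms valid_word_mono[OF Suc.prems] by simp
  also have "markov_eq (m + x) \<dots> m (ival 1 \<rho> @ \<gamma> @ wpow (ival m 1) \<rho> @ wpow (ival 1 \<rho>) x)"
    using Suc v1 Suc.IH[of "ival 1 \<rho> @ \<gamma>"] by simp
  also have "markov_eq m \<dots> m ((\<gamma> @ wpow (ival m 1) \<rho> @ wpow (ival 1 \<rho>) x) @ ival 1 \<rho>)"
    using Suc assms v1 by (intro markov_eq_rotate) (auto intro!: valid_word_ival valid_word_wpow)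
  finally show ?case
    by (simp add: wpow_Suc_right)
qed

corollary closure_wpow_ival_1:
  assumes "1 \<le> \<rho>" "\<rho> \<le> m" "valid_word m \<gamma>"
  shows "closure (m + x) (\<gamma> @ wpow (ival 1 (m + x)) \<rho>) = closure m (\<gamma> @ wpow (ival \<rho> 1) x @ wpow (ival 1 m) \<rho>)"
  using closure_eqI[OF markov_eq_ival_1_destab[OF assms]] .

corollary closure_wpow_ival_down:
  assumes "1 \<le> \<rho>" "\<rho> \<le> m" "valid_word m \<gamma>"
  shows "closure (m + x) (\<gamma> @ wpow (ival (m + x) 1) \<rho>) = closure m (\<gamma> @ wpow (ival m 1) \<rho> @ wpow (ival 1 \<rho>) x)"
  using closure_eqI[OF markov_eq_ival_down_destab[OF assms]] .

lemma closure_rotate: "1 \<le> n \<Longrightarrow> valid_word n u \<Longrightarrow> valid_word n v \<Longrightarrow> closure n (u @ v) = closure n (v @ u)"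
  by (rule closure_eqI, rule markov_eq_rotate)

lemma T_link_pair: "T_link [(a, b), (c, d)] = closure c (wpow (ival 1 a) b @ wpow (ival 1 c) d)"
  by (simp add: T_link_def)

theorem T_link_pair_reduce:
  assumes "2 \<le> \<rho>" "\<rho> \<le> m" "m \<le> n"
  shows "T_link [(m, y), (n, \<rho>)] = closure m (wpow (ival \<rho> 1) (n - m) @ wpow (ival 1 m) (\<rho> + y))"
proof -
  define G where "G = wpow (ival 1 m) y"
  define R where "R = wpow (ival \<rho> 1) (n - m) @ wpow (ival 1 m) \<rho>"
  have vG: "valid_word m G" and vR: "valid_word m R"
    using assms by (auto simp: G_def R_def intro!: valid_word_wpow valid_word_ival)
  have "T_link [(m, y), (n, \<rho>)] = closure (m + (n - m)) (G @ wpow (ival 1 (m + (n - m))) \<rho>)"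
    using assms by (simp add: T_link_pair G_def)
  also have "\<dots> = closure m (G @ R)"
    using closure_wpow_ival_1[of \<rho> m G "n - m"] assms vG by (simp add: R_def)
  also have "\<dots> = closure m (R @ G)"
    using closure_rotate[of m G R] vG vR assms by simp
  finally show ?thesis
    by (simp add: R_def G_def wpow_add)
qed

theorem T_link_multiple_eq_torus_link:
  assumes "2 \<le> m" "m < n" "n mod m = 0"
  shows "T_link [(m, y), (n, m)] = torus_link m (n + y)"
proof -
  have "m dvd n - m"
    using assms by (simp add: dvd_diff_nat mod_eq_0_iff_dvd)
  then obtain q where nm: "n - m = m * q"
    by blast
  have "braid_eq m (wpow (ival m 1) (n - m)) (wpow (ival 1 m) (n - m))"
    using braid_eq_wpow[OF wpow_ival_down_self, of m q] assms by (simp add: nm wpow_mult)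
  then have "braid_eq m (wpow (ival m 1) (n - m) @ wpow (ival 1 m) (m + y))
      (wpow (ival 1 m) (n - m) @ wpow (ival 1 m) (m + y))"
    using assms by (intro braid_eq_append_right) (auto intro!: valid_word_wpow valid_word_ival)
  then have "closure m (wpow (ival m 1) (n - m) @ wpow (ival 1 m) (m + y)) = torus_link m (n + y)"
    using assms closure_eqI[OF markov_eq.braid]
    by (simp add: torus_link_def T_link_def wpow_add[symmetric])
  then show ?thesis
    using T_link_pair_reduce[of m m n y] assms by simp
qed

lemma closure_conj_braid:
  assumes "1 \<le> n" "valid_word n g" "valid_word n a" "braid_eq n (g @ a) (b @ g)"
  shows "closure n a = closure n b"
proof (rule closure_eqI, rule markov_eq_conj_braid[OF assms(1-3)])
  have vb: "valid_word n b"
    using braid_eq_valid_word[OF assms(4)] by simp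
  have "braid_eq n ((g @ a) @ binv g) ((b @ g) @ binv g)"
    using assms by (intro braid_eq_append_right) auto
  also have "braid_eq n \<dots> (b @ [])"
    using braid_eq_cancel_binv[of n b g "[]"] assms vb by simp
  finally show "braid_eq n (g @ a @ binv g) b"
    by simp
qed

lemma closure_flip:
  assumes "1 \<le> n" "\<forall>k\<in>set w. 1 \<le> k \<and> k < int n"
  shows "closure n w = closure n (map (\<lambda>k. int n - k) w)"
  using assms half_twist_word_flip
  by (intro closure_conj_braid[OF _ valid_word_half_twist]) (auto simp: valid_word_def)

lemma closure_sigma_1_wpow_ival_1_swap:
  assumes "2 \<le> \<rho>" "\<rho> \<le> n"
  shows "closure n (wpow [1] y @ wpow (ival 1 n) \<rho>) = closure \<rho> (wpow [1] y @ wpow (ival 1 \<rho>) n)"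
proof -
  define P where "P = wpow (ival n 1) \<rho>"
  define g where "g = wpow (ival n 1) (n - 2)"
  have n1: "1 \<le> n"
    using assms by simp
  have vP: "valid_word n P" and vg: "valid_word n g"
    using assms by (auto simp: P_def g_def intro!: valid_word_wpow valid_word_ival)
  have "\<forall>k\<in>set (wpow [1] y @ wpow (ival 1 n) \<rho>). 1 \<le> k \<and> k < int n"
    using set_wpow[of "[1]" y] set_wpow[of "ival 1 n" \<rho>] assms by (auto dest!: set_ival)
  from closure_flip[OF n1 this]
  have "closure n (wpow [1] y @ wpow (ival 1 n) \<rho>) = closure n (wpow [int n - 1] y @ P)"
    unfolding map_append map_wpow map_diff_ival_1 P_def by simp
  also have "\<dots> = closure n (wpow [1] y @ P)"
  proof (rule closure_conj_braid[OF n1 vg])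
    show "valid_word n (wpow [int n - 1] y @ P)"
      using assms vP by (auto intro!: valid_word_wpow)
    have "braid_eq n (g @ wpow [int n - 1] y) (map (\<lambda>_. 1) (wpow [int n - 1] y) @ g)"
    proof (rule braid_eq_move_word[OF vg])
      fix k assume "k \<in> set (wpow [int n - 1] y)"
      then have "k = int (n - 1)"
        using set_wpow n1 by fastforce
      then show "braid_eq n (g @ [k]) ([1] @ g)"
        using wpow_ival_down_letter_shift[of n "n - 2" "n - 1"] assms by (simp add: g_def of_nat_diff)
    qed
    then have "braid_eq n ((g @ wpow [int n - 1] y) @ P) ((wpow [1] y @ g) @ P)"
      using vP by (intro braid_eq_append_right) (simp_all add: map_wpow)
    moreover have "g @ P = P @ g"
      unfolding g_def P_def by (rule wpow_commute)
    ultimately show "braid_eq n (g @ wpow [int n - 1] y @ P) ((wpow [1] y @ P) @ g)"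
      by simp
  qed
  also have "\<dots> = closure \<rho> (wpow [1] y @ wpow (ival \<rho> 1) \<rho> @ wpow (ival 1 \<rho>) (n - \<rho>))"
    using closure_wpow_ival_down[of \<rho> \<rho> "wpow [1] y" "n - \<rho>"] assms
    by (simp add: P_def valid_word_wpow)
  also have "\<dots> = closure \<rho> (wpow [1] y @ wpow (ival 1 \<rho>) \<rho> @ wpow (ival 1 \<rho>) (n - \<rho>))"
    using assms
    by (intro closure_eqI markov_eq.braid braid_eq_context wpow_ival_down_self)
      (auto intro!: valid_word_wpow valid_word_ival)
  finally show ?thesis
    using assms by (simp add: wpow_add[symmetric])
qed

theorem T_link_2_swap:
  assumes "2 \<le> \<rho>" "2 \<le> n"
  shows "T_link [(2, y), (n, \<rho>)] = T_link [(2, y), (\<rho>, n)]"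
  using closure_sigma_1_wpow_ival_1_swap[of \<rho> n y] closure_sigma_1_wpow_ival_1_swap[of n \<rho> y] assms
  by (cases "\<rho> \<le> n") (simp_all add: T_link_pair ival_def numeral_2_eq_2)

theorem proposition3p1:
  shows
  "(\<forall>n d. 2 \<le> n \<and> 1 \<le> d \<and> d \<le> n \<longrightarrow>
      braid_eq n (wpow (ival 1 n) d) (ival d 1 @ ival 1 n @ wpow (ival 1 (n - 1)) (d - 1)) \<and>
      braid_eq n (wpow (ival n 1) d) (wpow (ival (n - 1) 1) (d - 1) @ ival n 1 @ ival 1 d))
   \<and> (\<forall>\<rho> m x \<gamma>. 1 \<le> \<rho> \<and> \<rho> \<le> m \<and> 2 \<le> m + x \<and> valid_word m \<gamma> \<longrightarrow>
      closure (m + x) (\<gamma> @ wpow (ival 1 (m + x)) \<rho>)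
        = closure m (\<gamma> @ wpow (ival \<rho> 1) x @ wpow (ival 1 m) \<rho>) \<and>
      closure (m + x) (\<gamma> @ wpow (ival (m + x) 1) \<rho>)
        = closure m (\<gamma> @ wpow (ival m 1) \<rho> @ wpow (ival 1 \<rho>) x))
   \<and> (\<forall>m y n \<rho>. 2 \<le> \<rho> \<and> \<rho> \<le> m \<and> m \<le> n \<and> 1 \<le> y \<longrightarrow>
      T_link [(m, y), (n, \<rho>)] = closure m (wpow (ival \<rho> 1) (n - m) @ wpow (ival 1 m) (\<rho> + y)))
   \<and> (\<forall>y n \<rho>. 2 \<le> \<rho> \<and> 2 \<le> n \<and> 1 \<le> y \<longrightarrow>
      T_link [(2, y), (n, \<rho>)] = T_link [(2, y), (\<rho>, n)])
   \<and> (\<forall>m n y. 2 \<le> m \<and> m < n \<and> n mod m = 0 \<and> 1 \<le> y \<longrightarrow>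
      T_link [(m, y), (n, m)] = torus_link m (n + y))"
  by (intro conjI allI impI; elim conjE)
    (rule wpow_ival_1 wpow_ival_down closure_wpow_ival_1 closure_wpow_ival_down
      T_link_pair_reduce T_link_2_swap T_link_multiple_eq_torus_link; assumption)+
end
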